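(* Let $C\subset\mathbb{R}^2$ be compact and let $D$ be a closed disc whose center lies in $C$. Then \[\mathrm{diam}(C\cup D)\le\max\left(\mathrm{diam}(C)+\sqrt{\frac{2(\mathrm{area}(C\cup D)-\mathrm{area}(C))}{\pi}},\ \sqrt{\frac{4\,\mathrm{area}(C\cup D)}{\pi}}\right).\]
   Context: $\mathrm{area}$ denotes two-dimensional Lebesgue measure and $\mathrm{diam}(B)=\sup_{x,y\in B}\|x-y\|$ (Euclidean distance). *)

theory Defs
  imports "HOL-Analysis.Analysis"
begin

end

theory Submission
  imports Defs "HOL-Analysis.Analysis"
begin

text \<open>
  Let \<open>d = diameter C\<close> and let \<open>p \<in> C\<close>, \<open>q \<in> D\<close> be at distance \<open>d + s\<close> with \<open>s > 0\<close>.
  With \<open>u\<close> the unit vector from \<open>p\<close> towards \<open>q\<close>, all of \<open>C\<close> lies in the half-plane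
  \<open>(x - p) \<bullet> u \<le> d\<close>. Moving the centre \<open>c \<in> C\<close> of \<open>D\<close> along \<open>u\<close> up to the boundary line of
  that half-plane gives a point \<open>m\<close>, and since \<open>q \<in> D\<close>, the disc of radius \<open>s\<close> around \<open>m\<close>
  still lies in \<open>D\<close>. Its half beyond the line is disjoint from \<open>C\<close>, so adding \<open>D\<close> to \<open>C\<close>
  increases the area by at least \<open>\<pi> s\<^sup>2 / 2\<close>. Pairs of points both in \<open>C\<close> or both in \<open>D\<close>
  are handled by the first resp. second term of the maximum.
\<close>

lemma measure_half_cball:
  fixes m u :: "'a::euclidean_space"
  assumes "u \<noteq> 0"
  shows "measure lebesgue {x \<in> cball m h. 0 < (x - m) \<bullet> u} = measure lebesgue (cball m h) / 2"
proof -
  define P where "P = cball m h \<inter> {x. 0 < (x - m) \<bullet> u}"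
  define N where "N = cball m h \<inter> {x. (x - m) \<bullet> u < 0}"
  define Z where "Z = cball m h \<inter> {x. (x - m) \<bullet> u = 0}"
  have P: "P \<in> lmeasurable" and N: "N \<in> lmeasurable" and Z: "Z \<in> lmeasurable"
    unfolding P_def N_def Z_def
    by (intro fmeasurable_Int_fmeasurable lmeasurable_cball borel_open borel_closed
          open_Collect_less closed_Collect_eq continuous_intros sets_completionI_sets sets_lborel;
        simp)+
  have "Z \<subseteq> {x. u \<bullet> x = u \<bullet> m}"
    by (auto simp: Z_def inner_diff_left inner_diff_right inner_commute)
  then have Z_null: "negligible Z"
    using negligible_hyperplane assms negligible_subset by blast
  \<comment> \<open>The point reflection through \<open>m\<close> swaps the two open halves.\<close>
  have "N = (\<lambda>x. (-1) *\<^sub>R x + 2 *\<^sub>R m) ` P"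
  proof (rule set_eqI, rule iffI)
    fix x assume "x \<in> N"
    then have "2 *\<^sub>R m - x \<in> P"
      by (auto simp: N_def P_def dist_norm scaleR_2 inner_diff_left norm_minus_commute
               algebra_simps)
    then show "x \<in> (\<lambda>x. (-1) *\<^sub>R x + 2 *\<^sub>R m) ` P"
      by (rule rev_image_eqI) simp
  qed (auto simp: N_def P_def dist_norm scaleR_2 inner_diff_left norm_minus_commute
            algebra_simps)
  then have "measure lebesgue N = measure lebesgue P"
    using measure_lebesgue_affine[of "-1" "2 *\<^sub>R m" P] by simp
  moreover have "measure lebesgue (cball m h)
      = measure lebesgue P + measure lebesgue N + measure lebesgue Z"
    by (rule measure_Un3_negligible[OF P N Z])
       (auto simp: P_def N_def Z_def intro: negligible_subset[OF Z_null])
  ultimately show ?thesis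
    using negligible_imp_measure0[OF Z_null] by (simp add: P_def Int_def)
qed

lemma inner_diff_le_diameter:
  fixes C :: "'a::real_inner set"
  assumes "bounded C" "x \<in> C" "p \<in> C" "norm u = 1"
  shows "(x - p) \<bullet> u \<le> diameter C"
proof -
  have "(x - p) \<bullet> u \<le> norm (x - p) * norm u"
    by (rule norm_cauchy_schwarz)
  also have "\<dots> \<le> diameter C"
    using diameter_bounded_bound[OF assms(1-3)] assms(4) by (simp add: dist_norm)
  finally show ?thesis .
qed

lemma measure_cball_Diff_ge_half_ball:
  fixes C :: "'a::euclidean_space set"
  assumes C: "bounded C" "C \<in> sets lebesgue" and "c \<in> C" "p \<in> C" "q \<in> cball c r"
    and far: "diameter C \<le> dist p q"
  shows "unit_ball_vol (DIM('a)) * (dist p q - diameter C) ^ DIM('a) / 2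
           \<le> measure lebesgue (cball c r - C)"
proof (cases "p = q")
  case True
  then have "diameter C = 0"
    using far diameter_ge_0[OF C(1)] by simp
  then show ?thesis
    using True by (simp add: power_0_left)
next
  case False
  define d s L where "d = diameter C" and "s = dist p q - diameter C" and "L = dist p q"
  define u where "u = (1 / L) *\<^sub>R (q - p)"
  have "L > 0" using False by (simp add: L_def)
  then have u: "norm u = 1" and qp_u: "(q - p) \<bullet> u = L"
    by (simp_all add: u_def L_def dist_norm norm_minus_commute power2_norm_eq_inner[symmetric]
          power2_eq_square)
  define a where "a = (c - p) \<bullet> u"
  have "a \<le> d"
    using inner_diff_le_diameter[OF C(1) \<open>c \<in> C\<close> \<open>p \<in> C\<close> u] by (simp add: a_def d_def)
  define k where "k = d - a"
  define m where "m = c + k *\<^sub>R u"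
  define H where "H = {x \<in> cball m s. 0 < (x - m) \<bullet> u}"
  have "(q - c) \<bullet> u \<le> norm (q - c) * norm u"
    by (rule norm_cauchy_schwarz)
  moreover have "(q - c) \<bullet> u = L - a"
    using qp_u by (simp add: a_def inner_diff_left)
  ultimately have "k + s \<le> r"
    using \<open>q \<in> cball c r\<close> u by (simp add: k_def s_def d_def L_def dist_norm norm_minus_commute)
  then have "cball m s \<subseteq> cball c r"
    using \<open>a \<le> d\<close> u by (simp add: cball_subset_cball_iff m_def k_def dist_norm)
  moreover have "x \<notin> C" if "x \<in> H" for x
  proof
    assume "x \<in> C"
    have "(x - p) \<bullet> u = d + (x - m) \<bullet> u"
      using u by (simp add: m_def k_def a_def inner_diff_left inner_add_left
                    power2_norm_eq_inner[symmetric])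
    then show False
      using inner_diff_le_diameter[OF C(1) \<open>x \<in> C\<close> \<open>p \<in> C\<close> u] \<open>x \<in> H\<close>
      by (simp add: H_def d_def)
  qed
  ultimately have "H \<subseteq> cball c r - C"
    by (auto simp: H_def)
  moreover have "H \<in> lmeasurable"
    unfolding H_def Collect_conj_eq Collect_mem_eq
    by (intro fmeasurable_Int_fmeasurable lmeasurable_cball borel_open open_Collect_less
          continuous_intros sets_completionI_sets sets_lborel) simp
  ultimately have "measure lebesgue H \<le> measure lebesgue (cball c r - C)"
    using C(2) by (intro measure_mono_fmeasurable) (auto intro: fmeasurableD fmeasurable_Diff)
  moreover have "measure lebesgue H = unit_ball_vol (DIM('a)) * s ^ DIM('a) / 2"
    using measure_half_cball[of u m s] u far content_cball[of s m] norm_eq_zero[of u]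
    by (auto simp: H_def s_def)
  ultimately show ?thesis
    by (simp add: s_def)
qed

lemma dist_le_diameter_add_area_gain:
  fixes C :: "(real^2) set"
  assumes "compact C" "c \<in> C" "p \<in> C" "q \<in> C \<union> cball c r"
  shows "dist p q \<le> diameter C
           + sqrt (2 * (measure lebesgue (C \<union> cball c r) - measure lebesgue C) / pi)"
proof -
  define \<Delta> where "\<Delta> = measure lebesgue (C \<union> cball c r) - measure lebesgue C"
  have C: "bounded C" "C \<in> sets lebesgue"
    using assms(1) by (auto intro: compact_imp_bounded fmeasurableD lmeasurable_compact)
  have gain: "\<Delta> = measure lebesgue (cball c r - C)"
    unfolding \<Delta>_def using assms(1)
    by (subst measurable_measure_Diff[symmetric])
       (auto intro: lmeasurable_compact compact_Un fmeasurableD simp: Un_Diff)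
  show ?thesis
  proof (cases "q \<in> cball c r \<and> diameter C \<le> dist p q")
    case True
    have "pi * (dist p q - diameter C) ^ 2 / 2 \<le> \<Delta>"
      using measure_cball_Diff_ge_half_ball[OF C assms(2,3)] True gain
      by (simp add: unit_ball_vol_2)
    then have "(dist p q - diameter C) ^ 2 \<le> 2 * \<Delta> / pi"
      by (simp add: field_simps)
    then show ?thesis
      using real_le_rsqrt by (fastforce simp: \<Delta>_def)
  next
    case False
    then have "dist p q \<le> diameter C"
      using assms(3,4) diameter_bounded_bound[OF C(1)] by fastforce
    moreover have "\<Delta> \<ge> 0"
      using gain by simp
    ultimately show ?thesis
      by (simp add: \<Delta>_def[symmetric] add_increasing2)
  qed
qed

theorem lemma4:
  fixes C :: "(real^2) set" and c :: "real^2" and r :: real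
  assumes "compact C" and "c \<in> C" and "r > 0"
  shows "diameter (C \<union> cball c r) \<le>
    max (diameter C + sqrt (2 * (measure lebesgue (C \<union> cball c r) - measure lebesgue C) / pi))
        (sqrt (4 * measure lebesgue (C \<union> cball c r) / pi))"
    (is "_ \<le> max ?M1 ?M2")
proof (rule diameter_le)
  show "C \<union> cball c r \<noteq> {} \<or> 0 \<le> max ?M1 ?M2"
    using assms(2) by auto
  have "pi * r ^ 2 = measure lebesgue (cball c r)"
    using assms(3) content_cball[of r c] by (simp add: unit_ball_vol_2)
  also have "\<dots> \<le> measure lebesgue (C \<union> cball c r)"
    using assms(1) by (intro measure_mono_fmeasurable) (auto intro: lmeasurable_compact compact_Un)
  finally have "pi * r ^ 2 \<le> measure lebesgue (C \<union> cball c r)" .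
  then have "sqrt ((2 * r) ^ 2) \<le> ?M2"
    by (intro real_sqrt_le_mono) (simp add: field_simps)
  then have ball_bound: "2 * r \<le> ?M2"
    using assms(3) by (simp only: real_sqrt_abs abs_of_pos)
  fix x y assume "x \<in> C \<union> cball c r" "y \<in> C \<union> cball c r"
  then consider "x \<in> C" | "y \<in> C" | "x \<in> cball c r" "y \<in> cball c r"
    by blast
  then show "norm (x - y) \<le> max ?M1 ?M2"
  proof cases
    case 1
    then show ?thesis
      using dist_le_diameter_add_area_gain[OF assms(1,2) 1 \<open>y \<in> _\<close>]
      by (simp add: dist_norm)
  next
    case 2
    then show ?thesis
      using dist_le_diameter_add_area_gain[OF assms(1,2) 2 \<open>x \<in> _\<close>]
      by (simp add: dist_norm norm_minus_commute)
  next
    case 3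
    then have "norm (x - y) \<le> diameter (cball c r)"
      using diameter_bounded_bound[of "cball c r" x y] by (simp add: dist_norm)
    then show ?thesis
      using ball_bound assms(3) by simp
  qed
qed

end
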